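(* Let $N\ge 4$, $1\le m\le N$ and $1\le k\le N$ be integers. Consider a uniformly random ranking of $N$ items exactly $m$ of which are relevant, i.e. the set of positions of the relevant items is a uniformly random $m$-element subset of $\{1,\dots,N\}$. For $j=1,\dots,N$ let $I_j\in\{0,1\}$ equal $1$ iff the item at position $j$ is relevant, let $P@i=\frac1i\sum_{j=1}^i I_j$, and let $AP@k=\frac{1}{\min(m,k)}\sum_{i=1}^k P@i\cdot I_i$. Then $$\operatorname{Var}(AP@k)=\frac{1}{M^2}\frac{m}{N}\Big[k\big(C+2(E-F)+(k-1)G\big)+H_k\big(B-2(E-kF)\big)+H_k^2 D+H_k^{(2)}(A-D)\Big],$$ where $M=\min(m,k)$, $H_k=\sum_{i=1}^k\frac1i$, $H_k^{(2)}=\sum_{i=1}^k\frac1{i^2}$, and \begin{align*} A&=1-\frac{m}{N}-\frac{m-1}{N-1}\left(3-2\frac{m-2}{N-2}-\frac{m}{N}\left(2-\frac{m-1}{N-1}\right)\right),\\ B&=\frac{m-1}{N-1}\left(3\left(1-\frac{m-2}{N-2}\right)-2\frac{m}{N}\left(1-\frac{m-1}{N-1}\right)\right),\\ C&=\frac{m-1}{N-1}\left(\frac{m-2}{N-2}-\frac{m(m-1)}{N(N-1)}\right),\\ D&=\frac{m-1}{N-1}\left(2-5\frac{m-2}{N-2}+3\frac{(m-2)(m-3)}{(N-2)(N-3)}\right)-\frac{m}{N}\left(1-\frac{m-1}{N-1}\right)^2,\\ E&=\frac{m-1}{N-1}\left(3\frac{m-2}{N-2}\left(1-\frac{m-3}{N-3}\right)-\frac{m}{N}\left(1-\frac{m-1}{N-1}\right)\right),\\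 F&=\frac{m-1}{N-1}\left(\frac{m-2}{N-2}\left(1-\frac{m-3}{N-3}\right)-\frac{m}{N}\left(1-\frac{m-1}{N-1}\right)\right),\\ G&=\frac{m-1}{N-1}\left(\frac{(m-2)(m-3)}{(N-2)(N-3)}-\frac{m}{N}\frac{m-1}{N-1}\right). \end{align*}
   Context: This is the offline evaluation model (sampling of the $m$ relevant positions among $N$ without replacement, with equal probabilities). *)

theory Defs
  imports "HOL-Probability.Probability"
begin

text \<open>Sample space: the set of positions of the relevant items, a uniformly random
  m-element subset of {1..N}.\<close>
definition relevant_positions :: "nat \<Rightarrow> nat \<Rightarrow> nat set set" where
  "relevant_positions N m = {S. S \<subseteq> {1..N} \<and> card S = m}"

definition ranking_pmf :: "nat \<Rightarrow> nat \<Rightarrow> nat set pmf" where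
  "ranking_pmf N m = pmf_of_set (relevant_positions N m)"

definition rel_ind :: "nat set \<Rightarrow> nat \<Rightarrow> real" where
  "rel_ind S j = (if j \<in> S then 1 else 0)"

definition prec_at :: "nat set \<Rightarrow> nat \<Rightarrow> real" where
  "prec_at S i = (1 / real i) * (\<Sum>j=1..i. rel_ind S j)"

definition avg_prec_at :: "nat \<Rightarrow> nat \<Rightarrow> nat set \<Rightarrow> real" where
  "avg_prec_at m k S = (1 / real (min m k)) * (\<Sum>i=1..k. prec_at S i * rel_ind S i)"

end

theory Submission
  imports Defs
begin

(* Write Y = min m k * AP@k = (sum over j <= i <= k of I_i I_j / i).  Both Y and Y^2 are linear
   combinations of indicators "every position in T is relevant", and the probability of such an
   event depends only on t = card T: it is C(m,t) / C(N,t).  Counting the pairs (i,j) and the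
   quadruples (i,j,a,b) whose positions form a set of each size expresses E Y and E Y^2 through
   H_k and H_k^(2), and the variance formula becomes a rational identity in N and m. *)

lemma sum_card_insert:
  fixes h :: "nat \<Rightarrow> 'a::semiring_1"
  assumes "finite A" "finite D"
  shows "(\<Sum>b\<in>A. h (card (insert b D))) =
    of_nat (card (A \<inter> D)) * h (card D) + of_nat (card A - card (A \<inter> D)) * h (Suc (card D))"
proof -
  have "(\<Sum>b\<in>A. h (card (insert b D))) =
      (\<Sum>b\<in>A \<inter> D. h (card (insert b D))) + (\<Sum>b\<in>A - D. h (card (insert b D)))"
    using assms(1) by (metis sum.Int_Diff)
  also have "(\<Sum>b\<in>A \<inter> D. h (card (insert b D))) = (\<Sum>b\<in>A \<inter> D. h (card D))"
    by (intro sum.cong) (auto simp: insert_absorb)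
  also have "(\<Sum>b\<in>A - D. h (card (insert b D))) = (\<Sum>b\<in>A - D. h (Suc (card D)))"
    by (intro sum.cong) (auto simp: assms(2))
  finally show ?thesis using assms by (simp add: card_Diff_subset_Int)
qed

lemma sum_card_insert_interval:
  fixes h :: "nat \<Rightarrow> real"
  assumes "D \<subseteq> {1..a}"
  shows "(\<Sum>b=1..a. h (card (insert b D))) =
    real (card D) * h (card D) + (real a - real (card D)) * h (Suc (card D))"
proof -
  have "finite D" "{1..a} \<inter> D = D" "card D \<le> a"
    using assms finite_subset card_mono[OF _ assms] by auto
  then show ?thesis using sum_card_insert[of "{1..a}" D h] by (simp add: of_nat_diff)
qed

(* If Q t is the probability that t given positions are all relevant, then cross_sum Q i a is
   the expectation of (i * P@i * I_i) * (a * P@a * I_a). *)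
definition cross_sum :: "(nat \<Rightarrow> real) \<Rightarrow> nat \<Rightarrow> nat \<Rightarrow> real" where
  "cross_sum Q i a = (\<Sum>j=1..i. \<Sum>b=1..a. Q (card {i, j, a, b}))"

lemma cross_sum_commute: "cross_sum Q i a = cross_sum Q a i"
  unfolding cross_sum_def by (subst sum.swap) (simp add: insert_commute)

lemma cross_sum_eq_sum_insert:
  assumes "1 \<le> i" "i \<le> a"
  shows "cross_sum Q i a = (\<Sum>j=1..i. real (card (insert j {i, a})) * Q (card (insert j {i, a}))
    + (real a - real (card (insert j {i, a}))) * Q (Suc (card (insert j {i, a}))))"
  unfolding cross_sum_def
proof (intro sum.cong refl)
  fix j assume "j \<in> {1..i}"
  then have "insert j {i, a} \<subseteq> {1..a}" using assms by auto
  moreover have "{i, j, a, b} = insert b (insert j {i, a})" for b by auto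
  ultimately show "(\<Sum>b=1..a. Q (card {i, j, a, b})) = real (card (insert j {i, a})) * Q (card (insert j {i, a}))
      + (real a - real (card (insert j {i, a}))) * Q (Suc (card (insert j {i, a})))"
    by (simp only: sum_card_insert_interval)
qed

lemma cross_sum_less:
  assumes "1 \<le> i" "i < a"
  shows "cross_sum Q i a = 2 * Q 2 + (real a - 2) * Q 3 + (real i - 1) * (3 * Q 3 + (real a - 3) * Q 4)"
proof -
  define h where "h c = real c * Q c + (real a - real c) * Q (Suc c)" for c
  have "cross_sum Q i a = (\<Sum>j=1..i. h (card (insert j {i, a})))"
    unfolding h_def using assms by (simp add: cross_sum_eq_sum_insert)
  also have "\<dots> = real (card ({1..i} \<inter> {i, a})) * h (card {i, a})
      + real (card {1..i} - card ({1..i} \<inter> {i, a})) * h (Suc (card {i, a}))"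
    by (rule sum_card_insert) auto
  also have "{1..i} \<inter> {i, a} = {i}" using assms by auto
  also have "card {i, a} = 2" using assms by auto
  finally show ?thesis
    using assms unfolding h_def by (simp add: of_nat_diff numeral_eq_Suc algebra_simps)
qed

lemma cross_sum_diag:
  assumes "1 \<le> i"
  shows "cross_sum Q i i = Q 1 + 3 * (real i - 1) * Q 2 + (real i - 1) * (real i - 2) * Q 3"
proof -
  define h where "h c = real c * Q c + (real i - real c) * Q (Suc c)" for c
  have "cross_sum Q i i = (\<Sum>j=1..i. h (card (insert j {i})))"
    unfolding h_def using assms by (simp add: cross_sum_eq_sum_insert)
  also have "\<dots> = real (card ({1..i} \<inter> {i})) * h (card {i})
      + real (card {1..i} - card ({1..i} \<inter> {i})) * h (Suc (card {i}))"
    by (rule sum_card_insert) auto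
  also have "{1..i} \<inter> {i} = {i}" using assms by auto
  finally show ?thesis
    using assms unfolding h_def by (simp add: of_nat_diff numeral_eq_Suc algebra_simps)
qed

definition harm2 :: "nat \<Rightarrow> real" where
  "harm2 n = (\<Sum>i=1..n. inverse (real i ^ 2))"

lemma sum_pair_card:
  "(\<Sum>i=1..k. \<Sum>j=1..i. Q (card {i, j}) / real i) = harm k * (Q 1 - Q 2) + real k * Q 2"
proof -
  have "(\<Sum>j=1..i. Q (card {i, j}) / real i) = (Q 1 - Q 2) * inverse (real i) + Q 2"
    if "1 \<le> i" for i
  proof -
    have "(\<Sum>j=1..i. Q (card {i, j})) = (\<Sum>j=1..i. Q (card (insert j {i})))"
      by (simp add: insert_commute)
    also have "\<dots> = Q 1 + (real i - 1) * Q 2"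
      using that by (subst sum_card_insert_interval) (auto simp: numeral_2_eq_2)
    finally show ?thesis
      using that by (simp add: sum_divide_distrib[symmetric] field_simps)
  qed
  then have "(\<Sum>i=1..k. \<Sum>j=1..i. Q (card {i, j}) / real i) =
      (\<Sum>i=1..k. (Q 1 - Q 2) * inverse (real i) + Q 2)"
    by (intro sum.cong) auto
  then show ?thesis by (simp add: harm_def sum.distrib sum_distrib_left mult.commute)
qed

lemma sum_cross_sum_last_row:
  "(\<Sum>i=1..k. cross_sum Q i (Suc k) / (real i * real (Suc k))) =
    ((2 * Q 2 + (real k - 4) * Q 3 - (real k - 2) * Q 4) * harm k
      + (3 * Q 3 + (real k - 2) * Q 4) * real k) / (real k + 1)"
proof -
  let ?\<alpha> = "2 * Q 2 + (real k - 4) * Q 3 - (real k - 2) * Q 4"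
  let ?\<beta> = "3 * Q 3 + (real k - 2) * Q 4"
  have "cross_sum Q i (Suc k) / (real i * real (Suc k)) = (?\<alpha> * inverse (real i) + ?\<beta>) / (real k + 1)"
    if "i \<in> {1..k}" for i
    using that by (subst cross_sum_less) (auto simp: field_simps)
  then have "(\<Sum>i=1..k. cross_sum Q i (Suc k) / (real i * real (Suc k))) =
      (\<Sum>i=1..k. (?\<alpha> * inverse (real i) + ?\<beta>) / (real k + 1))"
    by (rule sum.cong[OF refl])
  then show ?thesis
    by (simp add: sum_divide_distrib[symmetric] sum.distrib sum_distrib_left[symmetric] harm_def)
qed

lemma sum_cross_sum:
  "(\<Sum>i=1..k. \<Sum>a=1..k. cross_sum Q i a / (real i * real a)) =
     harm k ^ 2 * (2 * Q 2 - 5 * Q 3 + 3 * Q 4) + harm2 k * (Q 1 - 5 * Q 2 + 7 * Q 3 - 3 * Q 4)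
     + harm k * (3 * Q 2 - 9 * Q 3 + 6 * Q 4) + 2 * real k * harm k * (Q 3 - Q 4)
     + 5 * real k * (Q 3 - Q 4) + real k ^ 2 * Q 4"
proof (induction k)
  case 0
  then show ?case by (simp add: harm_def harm2_def)
next
  case (Suc k)
  let ?g = "\<lambda>i a. cross_sum Q i a / (real i * real a)"
  have "(\<Sum>a=1..k. ?g (Suc k) a) = (\<Sum>i=1..k. ?g i (Suc k))"
    by (intro sum.cong refl) (metis cross_sum_commute mult.commute)
  then have "(\<Sum>i=1..Suc k. \<Sum>a=1..Suc k. ?g i a) =
      (\<Sum>i=1..k. \<Sum>a=1..k. ?g i a) + 2 * (\<Sum>i=1..k. ?g i (Suc k)) + ?g (Suc k) (Suc k)"
    by (simp add: sum.distrib)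
  also have "?g (Suc k) (Suc k) =
      (Q 1 + 3 * real k * Q 2 + real k * (real k - 1) * Q 3) / (real k + 1) ^ 2"
    by (subst cross_sum_diag) (simp_all add: power2_eq_square algebra_simps)
  finally have split: "(\<Sum>i=1..Suc k. \<Sum>a=1..Suc k. ?g i a) =
      (\<Sum>i=1..k. \<Sum>a=1..k. ?g i a) + 2 * (\<Sum>i=1..k. ?g i (Suc k))
      + (Q 1 + 3 * real k * Q 2 + real k * (real k - 1) * Q 3) / (real k + 1) ^ 2" .
  have harm_step: "harm (Suc k) = harm k + 1 / (real k + 1)"
    "harm2 (Suc k) = harm2 k + 1 / (real k + 1) ^ 2"
    by (simp_all add: harm_Suc harm2_def inverse_eq_divide)
  (* field_simps only clears the denominators reliably once real k + 1 is an atom *)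
  define u where "u = real k + 1"
  have u: "u \<noteq> 0" "real k = u - 1" unfolding u_def by simp_all
  show ?case
    unfolding split Suc.IH sum_cross_sum_last_row unfolding harm_step of_nat_Suc u(2)
    using u(1) by (simp add: field_simps power2_eq_square)
qed

lemma finite_relevant_positions: "finite (relevant_positions N m)"
  unfolding relevant_positions_def by (rule finite_subset[of _ "Pow {1..N}"]) auto

lemma relevant_positions_nonempty:
  assumes "m \<le> N"
  shows "relevant_positions N m \<noteq> {}"
proof -
  have "{1..m} \<in> relevant_positions N m" using assms unfolding relevant_positions_def by auto
  then show ?thesis by blast
qed

lemma card_relevant_positions: "card (relevant_positions N m) = N choose m"
  unfolding relevant_positions_def using n_subsets[of "{1..N}" m] by simp

lemma card_relevant_positions_superset:
  assumes "T \<subseteq> {1..N}" "card T \<le> m"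
  shows "card {S \<in> relevant_positions N m. T \<subseteq> S} = (N - card T) choose (m - card T)"
proof -
  have fin: "finite T" using assms(1) finite_subset by blast
  let ?U = "{U. U \<subseteq> {1..N} - T \<and> card U = m - card T}"
  have "{S \<in> relevant_positions N m. T \<subseteq> S} = (\<lambda>U. U \<union> T) ` ?U"
  proof (intro equalityI subsetI)
    fix S assume "S \<in> {S \<in> relevant_positions N m. T \<subseteq> S}"
    then have S: "S \<subseteq> {1..N}" "card S = m" "T \<subseteq> S" "finite S"
      unfolding relevant_positions_def using finite_subset by auto
    then have "S - T \<in> ?U" using fin by (auto simp: card_Diff_subset)
    moreover have "S = (S - T) \<union> T" using S by blast
    ultimately show "S \<in> (\<lambda>U. U \<union> T) ` ?U" by blast
  next
    fix S assume "S \<in> (\<lambda>U. U \<union> T) ` ?U"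
    then obtain U where U: "U \<subseteq> {1..N} - T" "card U = m - card T" "S = U \<union> T" by blast
    moreover have "U \<inter> T = {}" using U(1) by blast
    ultimately have "card S = m"
      using assms fin finite_subset[OF U(1)] by (simp add: card_Un_disjoint)
    then show "S \<in> {S \<in> relevant_positions N m. T \<subseteq> S}"
      using U assms unfolding relevant_positions_def by auto
  qed
  moreover have "inj_on (\<lambda>U. U \<union> T) ?U" by (rule inj_onI) blast
  ultimately have "card {S \<in> relevant_positions N m. T \<subseteq> S} = card ?U" by (simp add: card_image)
  also have "\<dots> = (N - card T) choose (m - card T)"
    using n_subsets[of "{1..N} - T"] assms fin by (simp add: card_Diff_subset)
  finally show ?thesis .
qed

lemma set_pmf_ranking_pmf: "m \<le> N \<Longrightarrow> set_pmf (ranking_pmf N m) = relevant_positions N m"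
  unfolding ranking_pmf_def by (simp add: relevant_positions_nonempty finite_relevant_positions)

lemma integrable_ranking_pmf:
  fixes f :: "nat set \<Rightarrow> real"
  assumes "m \<le> N"
  shows "integrable (measure_pmf (ranking_pmf N m)) f"
  by (rule integrable_measure_pmf_finite)
    (simp add: assms set_pmf_ranking_pmf finite_relevant_positions)

definition inclusion_prob :: "nat \<Rightarrow> nat \<Rightarrow> nat \<Rightarrow> real" where
  "inclusion_prob N m t = real (m choose t) / real (N choose t)"

lemma inclusion_prob_eq_prod:
  assumes "t \<le> N"
  shows "inclusion_prob N m t = (\<Prod>i<t. (real m - real i) / (real N - real i))"
proof -
  have "real (n choose t) = (\<Prod>i<t. real n - real i) / fact t" for n
    by (simp add: binomial_gbinomial gbinomial_prod_rev atLeast0LessThan)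
  moreover have "(\<Prod>i<t. real N - real i) \<noteq> 0"
    using assms by (simp add: prod_zero_iff)
  ultimately show ?thesis
    unfolding inclusion_prob_def by (simp add: prod_dividef)
qed

lemma expectation_ranking_superset:
  assumes "m \<le> N" "T \<subseteq> {1..N}"
  shows "measure_pmf.expectation (ranking_pmf N m) (\<lambda>S. of_bool (T \<subseteq> S)) = inclusion_prob N m (card T)"
proof -
  let ?R = "relevant_positions N m"
  let ?t = "card T"
  have "measure_pmf.expectation (ranking_pmf N m) (\<lambda>S. of_bool (T \<subseteq> S))
      = real (card {S \<in> ?R. T \<subseteq> S}) / real (N choose m)"
    unfolding ranking_pmf_def
    using relevant_positions_nonempty[OF assms(1)] finite_relevant_positions[of N m]
    by (simp add: integral_pmf_of_set card_relevant_positions sum_of_bool_eq Int_def)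
  also have "\<dots> = inclusion_prob N m ?t"
  proof (cases "?t \<le> m")
    case True
    have "real (N choose m) * real (m choose ?t) = real (N choose ?t) * real ((N - ?t) choose (m - ?t))"
      unfolding of_nat_mult[symmetric] using choose_mult[OF True assms(1)] by (rule arg_cong)
    moreover have "real (N choose m) \<noteq> 0" "real (N choose ?t) \<noteq> 0"
      using True assms(1) by auto
    ultimately show ?thesis
      unfolding inclusion_prob_def card_relevant_positions_superset[OF assms(2) True]
      by (simp add: divide_simps) (metis mult.commute)
  next
    case False
    have "card T \<le> m" if "S \<in> ?R" "T \<subseteq> S" for S
      using that card_mono[of S T] unfolding relevant_positions_def by (auto intro: finite_subset)
    then have "{S \<in> ?R. T \<subseteq> S} = {}" using False by blast
    then show ?thesis using False unfolding inclusion_prob_def by (simp only:) simp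
  qed
  finally show ?thesis .
qed

lemma avg_prec_at_eq_pair_sum:
  "avg_prec_at m k S = (\<Sum>i=1..k. \<Sum>j=1..i. of_bool ({i, j} \<subseteq> S) / real i) / real (min m k)"
proof -
  have "prec_at S i * rel_ind S i = (\<Sum>j=1..i. of_bool ({i, j} \<subseteq> S) / real i)" for i
    unfolding prec_at_def rel_ind_def sum_distrib_left sum_distrib_right
    by (intro sum.cong) auto
  then show ?thesis unfolding avg_prec_at_def by simp
qed

lemma pair_sum_square:
  "(\<Sum>i=1..k. \<Sum>j=1..i. of_bool ({i, j} \<subseteq> S) / real i) ^ 2 =
    (\<Sum>i=1..k. \<Sum>a=1..k. (\<Sum>j=1..i. \<Sum>b=1..a. of_bool ({i, j, a, b} \<subseteq> S)) / (real i * real a))"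
proof -
  have "of_bool ({i, j} \<subseteq> S) * of_bool ({a, b} \<subseteq> S) = (of_bool ({i, j, a, b} \<subseteq> S) :: real)"
    for i j a b :: nat
    by auto
  then show ?thesis
    unfolding power2_eq_square sum_product sum_divide_distrib
    by (intro sum.cong refl) (simp add: sum.swap[of _ "{1.._}" "{1..i}" for i] field_simps)
qed

lemma expectation_pair_sum:
  assumes "m \<le> N" "k \<le> N"
  shows "measure_pmf.expectation (ranking_pmf N m)
      (\<lambda>S. \<Sum>i=1..k. \<Sum>j=1..i. of_bool ({i, j} \<subseteq> S) / real i)
    = harm k * (inclusion_prob N m 1 - inclusion_prob N m 2) + real k * inclusion_prob N m 2"
proof -
  have "measure_pmf.expectation (ranking_pmf N m)
        (\<lambda>S. \<Sum>i=1..k. \<Sum>j=1..i. of_bool ({i, j} \<subseteq> S) / real i)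
      = (\<Sum>i=1..k. \<Sum>j=1..i.
          measure_pmf.expectation (ranking_pmf N m) (\<lambda>S. of_bool ({i, j} \<subseteq> S)) / real i)"
    using assms by (simp add: integrable_ranking_pmf del: insert_subset)
  also have "\<dots> = (\<Sum>i=1..k. \<Sum>j=1..i. inclusion_prob N m (card {i, j}) / real i)"
    using assms by (intro sum.cong refl) (subst expectation_ranking_superset, auto)
  finally show ?thesis by (simp only: sum_pair_card)
qed

lemma expectation_pair_sum_square:
  assumes "m \<le> N" "k \<le> N"
  shows "measure_pmf.expectation (ranking_pmf N m)
      (\<lambda>S. (\<Sum>i=1..k. \<Sum>j=1..i. of_bool ({i, j} \<subseteq> S) / real i) ^ 2)
    = (\<Sum>i=1..k. \<Sum>a=1..k. cross_sum (inclusion_prob N m) i a / (real i * real a))"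
proof -
  have "measure_pmf.expectation (ranking_pmf N m)
        (\<lambda>S. (\<Sum>i=1..k. \<Sum>j=1..i. of_bool ({i, j} \<subseteq> S) / real i) ^ 2)
      = (\<Sum>i=1..k. \<Sum>a=1..k. (\<Sum>j=1..i. \<Sum>b=1..a.
          measure_pmf.expectation (ranking_pmf N m) (\<lambda>S. of_bool ({i, j, a, b} \<subseteq> S)))
          / (real i * real a))"
    unfolding pair_sum_square using assms
    by (simp add: integrable_ranking_pmf del: insert_subset sum_of_bool_eq)
  also have "\<dots> = (\<Sum>i=1..k. \<Sum>a=1..k. cross_sum (inclusion_prob N m) i a / (real i * real a))"
    unfolding cross_sum_def using assms
    by (intro sum.cong refl arg_cong2[where f="(/)"]) (subst expectation_ranking_superset, auto)
  finally show ?thesis .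
qed

lemma variance_avg_prec_at:
  assumes "m \<le> N" "k \<le> N"
  defines "q \<equiv> inclusion_prob N m"
  shows "measure_pmf.variance (ranking_pmf N m) (avg_prec_at m k) =
    (harm k ^ 2 * (2 * q 2 - 5 * q 3 + 3 * q 4) + harm2 k * (q 1 - 5 * q 2 + 7 * q 3 - 3 * q 4)
      + harm k * (3 * q 2 - 9 * q 3 + 6 * q 4) + 2 * real k * harm k * (q 3 - q 4)
      + 5 * real k * (q 3 - q 4) + real k ^ 2 * q 4
      - (harm k * (q 1 - q 2) + real k * q 2) ^ 2) / real (min m k) ^ 2"
proof -
  let ?P = "ranking_pmf N m"
  define Y where "Y S = (\<Sum>i=1..k. \<Sum>j=1..i. of_bool ({i, j} \<subseteq> S) / real i)" for S
  have "measure_pmf.variance ?P (avg_prec_at m k) = measure_pmf.variance ?P (\<lambda>S. Y S / real (min m k))"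
    unfolding avg_prec_at_eq_pair_sum Y_def ..
  also have "\<dots> = (measure_pmf.expectation ?P (\<lambda>S. Y S ^ 2) - (measure_pmf.expectation ?P Y) ^ 2)
      / real (min m k) ^ 2"
    by (subst measure_pmf.variance_eq)
      (simp_all add: integrable_ranking_pmf assms power_divide diff_divide_distrib)
  finally show ?thesis
    unfolding Y_def expectation_pair_sum_square[OF assms(1,2)] sum_cross_sum
      expectation_pair_sum[OF assms(1,2)] q_def .
qed

theorem theorem2:
  fixes N m k :: nat
  assumes "N \<ge> 4" and "1 \<le> m" and "m \<le> N" and "1 \<le> k" and "k \<le> N"
  defines "n \<equiv> real N" and "r \<equiv> real m"
  defines "M \<equiv> real (min m k)"
  defines "Hk \<equiv> (\<Sum>i=1..k. 1 / real i)"
  defines "Hk2 \<equiv> (\<Sum>i=1..k. 1 / (real i)^2)"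
  defines "A \<equiv> 1 - r/n - (r-1)/(n-1) * (3 - 2*(r-2)/(n-2) - r/n * (2 - (r-1)/(n-1)))"
  defines "B \<equiv> (r-1)/(n-1) * (3*(1 - (r-2)/(n-2)) - 2*(r/n)*(1 - (r-1)/(n-1)))"
  defines "C \<equiv> (r-1)/(n-1) * ((r-2)/(n-2) - r*(r-1)/(n*(n-1)))"
  defines "D \<equiv> (r-1)/(n-1) * (2 - 5*(r-2)/(n-2) + 3*((r-2)*(r-3))/((n-2)*(n-3)))
                 - r/n * (1 - (r-1)/(n-1))^2"
  defines "E \<equiv> (r-1)/(n-1) * (3*((r-2)/(n-2))*(1 - (r-3)/(n-3)) - r/n*(1 - (r-1)/(n-1)))"
  defines "F \<equiv> (r-1)/(n-1) * ((r-2)/(n-2)*(1 - (r-3)/(n-3)) - r/n*(1 - (r-1)/(n-1)))"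
  defines "G \<equiv> (r-1)/(n-1) * ((r-2)*(r-3)/((n-2)*(n-3)) - r/n*((r-1)/(n-1)))"
  shows "measure_pmf.variance (ranking_pmf N m) (avg_prec_at m k) =
           1 / M^2 * (r/n) * (real k * (C + 2*(E - F) + (real k - 1)*G)
             + Hk * (B - 2*(E - real k * F)) + Hk^2 * D + Hk2 * (A - D))"
proof -
  have mN: "m \<le> N" and kN: "k \<le> N" using assms by simp_all
  define q where "q = inclusion_prob N m"
  have q: "q 1 = r/n" "q 2 = r/n * ((r-1)/(n-1))" "q 3 = r/n * ((r-1)/(n-1)) * ((r-2)/(n-2))"
     "q 4 = r/n * ((r-1)/(n-1)) * ((r-2)/(n-2)) * ((r-3)/(n-3))"
    using assms(1) unfolding q_def r_def n_def
    by (simp_all add: inclusion_prob_eq_prod numeral_eq_Suc lessThan_Suc mult_ac)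
  have harm: "harm k = Hk" "harm2 k = Hk2"
    unfolding Hk_def Hk2_def harm_def harm2_def by (simp_all add: inverse_eq_divide)
  define n1 n2 n3 where "n1 = n - 1" and "n2 = n - 2" and "n3 = n - 3"
  have "n \<noteq> 0" "n1 \<noteq> 0" "n2 \<noteq> 0" "n3 \<noteq> 0"
    using assms(1) unfolding n_def n1_def n2_def n3_def by auto
  then have key: "Hk ^ 2 * (2 * q 2 - 5 * q 3 + 3 * q 4) + Hk2 * (q 1 - 5 * q 2 + 7 * q 3 - 3 * q 4)
      + Hk * (3 * q 2 - 9 * q 3 + 6 * q 4) + 2 * real k * Hk * (q 3 - q 4)
      + 5 * real k * (q 3 - q 4) + real k ^ 2 * q 4 - (Hk * (q 1 - q 2) + real k * q 2) ^ 2
    = r/n * (real k * (C + 2*(E - F) + (real k - 1)*G)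
             + Hk * (B - 2*(E - real k * F)) + Hk^2 * D + Hk2 * (A - D))"
    unfolding q A_def B_def C_def D_def E_def F_def G_def
      n1_def[symmetric] n2_def[symmetric] n3_def[symmetric]
    by (simp add: field_simps power2_eq_square)
  show ?thesis
    unfolding variance_avg_prec_at[OF mN kN] q_def[symmetric] harm key M_def by simp
qed

end
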